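(* The homomorphism $P\Gamma_L\to{\rm PGL}_2(7)$ is surjective.
   Context: Let $\mathcal{O}$ be the ring of integers of $\mathbb{Q}(\sqrt{-7})$, $\Gamma_L$ the unitary group of the standard Hermitian lattice $\mathcal{O}[\tfrac12]^3$, and $P\Gamma_L$ its quotient by scalars; a fixed embedding $\mathcal{O}\to\mathbb{Z}_2$ identifies $P\Gamma_L$ with a lattice in ${\rm PGL}_3(\mathbb{Q}_2)$. With $\theta=\sqrt{-7}$, the Hermitian form induces a nondegenerate symmetric bilinear form on $\mathcal{O}[\tfrac12]^3/\theta\mathcal{O}[\tfrac12]^3\cong\mathbb{F}_7^3$, yielding the homomorphism $P\Gamma_L\to{\rm PO}_3(7)\cong{\rm PGL}_2(7)$ in question. *)

theory Defs
  imports "HOL-Analysis.Analysis"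
begin

text \<open>omega = (1 + sqrt(-7))/2, so O = Z[omega] is the ring of integers of Q(sqrt(-7));
  theta = sqrt(-7). Everything lives inside the complex numbers.\<close>

definition omega7 :: complex where "omega7 = Complex (1/2) (sqrt 7 / 2)"
definition theta7 :: complex where "theta7 = Complex 0 (sqrt 7)"

definition O_half :: "complex set" where
  "O_half = {(of_int a + of_int b * omega7) / 2 ^ k | a b k. True}"

text \<open>Reduction O[1/2] -> O[1/2]/theta O[1/2] = F_7 (F_7 is the type 7).\<close>
definition red7 :: "complex \<Rightarrow> 7" where
  "red7 z = (THE r :: 7. \<exists>n::int. of_int n = r \<and> (z - of_int n) / theta7 \<in> O_half)"

definition conj_transp :: "complex^3^3 \<Rightarrow> complex^3^3" where
  "conj_transp g = (\<chi> i j. cnj (g $ j $ i))"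

definition GammaL :: "(complex^3^3) set" where
  "GammaL = {g. (\<forall>i j. g $ i $ j \<in> O_half) \<and> g ** conj_transp g = mat 1}"

definition red_mat :: "complex^3^3 \<Rightarrow> 7^3^3" where
  "red_mat g = (\<chi> i j. red7 (g $ i $ j))"

text \<open>Orthogonal group of the form sum x_i y_i on F_7^3, and its projectivisation
  (quotient by the scalars in O_3(7), namely +-1); a class is the set {A, -A}.\<close>
definition O3_7 :: "(7^3^3) set" where
  "O3_7 = {A. transpose A ** A = mat 1}"

definition po_class :: "7^3^3 \<Rightarrow> (7^3^3) set" where
  "po_class A = {A, - A}"

definition PO3_7 :: "(7^3^3) set set" where
  "PO3_7 = po_class ` O3_7"

text \<open>The homomorphism P Gamma_L -> PO_3(7), composed with Gamma_L -> P Gamma_L: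
  g maps to the class of its reduction mod theta.\<close>
definition PGammaL_to_PO3 :: "complex^3^3 \<Rightarrow> (7^3^3) set" where
  "PGammaL_to_PO3 g = po_class (red_mat g)"

end

theory Submission
  imports Defs
begin

text \<open>Reduction modulo \<open>\<theta>\<close> is a ring homomorphism \<open>O[1/2] \<rightarrow> \<bbbF>\<^sub>7\<close> commuting with
  complex conjugation, so it maps \<open>\<Gamma>\<^sub>L\<close> onto a subgroup \<open>H\<close> of \<open>O\<^sub>3(7)\<close>, and it suffices to
  show \<open>H = O\<^sub>3(7)\<close>. \<open>H\<close> contains the coordinate permutations, \<open>diag(1,1,-1)\<close> and the reduction
  of a unitary matrix with entries \<open>\<omega>/2, (\<plusminus>1 \<plusminus> \<omega>)/2\<close>, a rotation of the \<open>(2,3)\<close>-plane whose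
  powers fill the whole rotation group of that plane. Every unit vector \<open>(x,y,z)\<close> has a coordinate,
  say \<open>x\<close>, with \<open>1 - x\<^sup>2 = s\<^sup>2\<close> a square (only \<open>x\<^sup>2 = 2\<close> fails, and \<open>2 + 2 + 2 \<noteq> 1\<close>), and then
  \<open>e\<^sub>1 \<mapsto> e\<^sub>2 \<mapsto> (0,s,x) \<mapsto> (x,s,0) \<mapsto> (x,y,z)\<close> by permutations and plane rotations. So \<open>H\<close> is
  transitive on the unit sphere, and an orthogonal matrix fixing \<open>e\<^sub>1\<close> is a plane rotation
  times \<open>diag(1,1,\<plusminus>1)\<close>.\<close>

definition O_half_elt :: "int \<Rightarrow> int \<Rightarrow> nat \<Rightarrow> complex" where
  "O_half_elt a b k = (of_int a + of_int b * omega7) / 2 ^ k"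

lemma O_half_eq: "O_half = {O_half_elt a b k | a b k. True}"
  unfolding O_half_def O_half_elt_def by auto

lemma O_half_elt_in_O_half [simp]: "O_half_elt a b k \<in> O_half"
  unfolding O_half_eq by blast

lemma O_halfE:
  assumes "z \<in> O_half"
  obtains a b k where "z = O_half_elt a b k"
  using assms unfolding O_half_eq by auto

lemma omega7_squared: "omega7 * omega7 = omega7 - 2"
  unfolding omega7_def by (simp add: complex_eq_iff field_simps)

lemma cnj_omega7: "cnj omega7 = 1 - omega7"
  unfolding omega7_def by (simp add: complex_eq_iff)

lemma theta7_eq: "theta7 = 2 * omega7 - 1"
  unfolding omega7_def theta7_def by (simp add: complex_eq_iff)

lemma theta7_nonzero: "theta7 \<noteq> 0"
  unfolding theta7_def by (simp add: complex_eq_iff)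

lemma int_combination_omega7_eq_0_iff:
  "of_int a + of_int b * omega7 = 0 \<longleftrightarrow> a = 0 \<and> b = 0"
proof
  assume h: "of_int a + of_int b * omega7 = 0"
  then have "Im (of_int a + of_int b * omega7) = 0" by simp
  then have "b = 0" unfolding omega7_def by simp
  with h show "a = 0 \<and> b = 0" by simp
qed simp

lemma O_half_elt_add:
  "O_half_elt a b k + O_half_elt c d j = O_half_elt (a * 2^j + c * 2^k) (b * 2^j + d * 2^k) (k + j)"
  unfolding O_half_elt_def by (simp add: field_simps power_add)

lemma O_half_elt_mult:
  "O_half_elt a b k * O_half_elt c d j = O_half_elt (a*c - 2*b*d) (a*d + b*c + b*d) (k + j)"
proof -
  have "(of_int a + of_int b * omega7) * (of_int c + of_int d * omega7)
      = of_int a * of_int c + (of_int a * of_int d + of_int b * of_int c) * omega7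
        + of_int b * of_int d * (omega7 * omega7)"
    by (simp add: algebra_simps)
  also have "\<dots> = of_int (a*c - 2*b*d) + of_int (a*d + b*c + b*d) * omega7"
    by (simp add: omega7_squared algebra_simps)
  finally show ?thesis unfolding O_half_elt_def by (simp add: power_add)
qed

lemma cnj_O_half_elt: "cnj (O_half_elt a b k) = O_half_elt (a + b) (- b) k"
  unfolding O_half_elt_def by (simp add: cnj_omega7 algebra_simps)

lemma theta7_mult_O_half_elt: "theta7 * O_half_elt c d j = O_half_elt (- c - 4*d) (2*c + d) j"
proof -
  have "theta7 * (of_int c + of_int d * omega7)
      = 2 * of_int d * (omega7 * omega7) + (2 * of_int c - of_int d) * omega7 - of_int c"
    by (simp add: theta7_eq algebra_simps)
  also have "\<dots> = of_int (- c - 4*d) + of_int (2*c + d) * omega7"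
    by (simp add: omega7_squared algebra_simps)
  finally show ?thesis unfolding O_half_elt_def by simp
qed

lemma of_int_7_eq_iff: "(of_int x :: 7) = of_int y \<longleftrightarrow> 7 dvd (x - y)"
  using of_int_eq_0_iff_char_dvd [where 'a = 7, of "x - y"] by simp

text \<open>In the basis \<open>1, \<omega>\<close> the ideal \<open>\<theta>\<close> is the kernel of \<open>a + b\<omega> \<mapsto> a + 4b mod 7\<close>,
  i.e. \<open>\<omega> \<equiv> 4\<close>; powers of \<open>2\<close> are units modulo \<open>7\<close>.\<close>
lemma O_half_elt_div_theta7_iff:
  "O_half_elt a b k / theta7 \<in> O_half \<longleftrightarrow> (of_int (a + 4*b) :: 7) = 0"
proof -
  have "O_half_elt a b k / theta7 \<in> O_half \<longleftrightarrow> 7 dvd (a + 4*b)"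
  proof
    assume "O_half_elt a b k / theta7 \<in> O_half"
    then obtain c d j where "O_half_elt a b k / theta7 = O_half_elt c d j"
      by (rule O_halfE)
    then have "O_half_elt a b k = theta7 * O_half_elt c d j"
      using theta7_nonzero by (simp add: field_simps)
    also have "\<dots> = O_half_elt (- c - 4*d) (2*c + d) j"
      by (rule theta7_mult_O_half_elt)
    finally have "O_half_elt a b k = O_half_elt (- c - 4*d) (2*c + d) j" .
    then have "(of_int a + of_int b * omega7) * 2^j = (of_int (- c - 4*d) + of_int (2*c + d) * omega7) * 2^k"
      unfolding O_half_elt_def by (simp add: field_simps)
    then have "of_int (a * 2^j - (- c - 4*d) * 2^k) + of_int (b * 2^j - (2*c + d) * 2^k) * omega7 = 0"
      by (simp add: algebra_simps)
    then have a: "a * 2^j = (- c - 4*d) * 2^k" and b: "b * 2^j = (2*c + d) * 2^k"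
      unfolding int_combination_omega7_eq_0_iff by simp_all
    have "(a + 4*b) * 2^j = a * 2^j + 4 * (b * 2^j)"
      by (simp add: algebra_simps)
    also have "\<dots> = 7 * (c * 2^k)"
      unfolding a b by (simp add: algebra_simps)
    finally have "7 dvd (a + 4*b) * 2^j" by simp
    moreover have "coprime (7::int) (2^j)" by simp
    ultimately show "7 dvd (a + 4*b)" using coprime_dvd_mult_left_iff by blast
  next
    assume "7 dvd (a + 4*b)"
    then obtain m where "a = 7*m - 4*b" by (metis dvd_def add_diff_cancel_right')
    have "theta7 * O_half_elt m (b - 2*m) k = O_half_elt a b k"
      unfolding theta7_mult_O_half_elt \<open>a = 7*m - 4*b\<close> by (simp add: algebra_simps)
    then have "O_half_elt a b k / theta7 = O_half_elt m (b - 2*m) k"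
      using theta7_nonzero by (simp add: field_simps)
    then show "O_half_elt a b k / theta7 \<in> O_half" by simp
  qed
  then show ?thesis
    using of_int_eq_0_iff_char_dvd [where 'a = 7, of "a + 4*b"] by simp
qed

lemma two_pow_mult_four_pow: "(2::7)^k * 4^k = 1"
proof -
  have eight: "(8::7) = 1" by simp
  show ?thesis by (simp add: eight flip: power_mult_distrib)
qed

lemma red7_O_half_elt: "red7 (O_half_elt a b k) = of_int (a + 4*b) * 4^k"
proof -
  let ?c = "of_int (a + 4*b) * 4^k :: 7"
  have residue: "(O_half_elt a b k - of_int n) / theta7 \<in> O_half \<longleftrightarrow> of_int n = ?c" for n
  proof -
    have "O_half_elt a b k - of_int n = O_half_elt (a - n * 2^k) b k"
      unfolding O_half_elt_def by (simp add: field_simps)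
    then have "(O_half_elt a b k - of_int n) / theta7 \<in> O_half
        \<longleftrightarrow> of_int (a + 4*b) = (of_int n * 2^k :: 7)"
      by (simp add: O_half_elt_div_theta7_iff algebra_simps)
    also have "\<dots> \<longleftrightarrow> of_int n = ?c"
    proof
      assume "of_int (a + 4*b) = (of_int n * 2^k :: 7)"
      then have "?c = of_int n * (2^k * 4^k)" by (simp add: mult.assoc)
      then show "of_int n = ?c" by (simp add: two_pow_mult_four_pow)
    next
      assume "of_int n = ?c"
      then have "of_int n * 2^k = of_int (a + 4*b) * (2^k * 4^k :: 7)" by (simp add: ac_simps)
      then show "of_int (a + 4*b) = (of_int n * 2^k :: 7)" by (simp add: two_pow_mult_four_pow)
    qed
    finally show ?thesis .
  qed
  have "\<exists>n. of_int n = ?c"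
    by (metis of_int_mult of_int_power of_int_numeral)
  then show ?thesis
    unfolding red7_def residue by auto
qed

lemma O_half_0: "0 \<in> O_half" and red7_0: "red7 0 = 0"
  using O_half_elt_in_O_half [of 0 0 0] red7_O_half_elt [of 0 0 0]
  by (simp_all add: O_half_elt_def)

lemma O_half_1: "1 \<in> O_half" and red7_1: "red7 1 = 1"
  using O_half_elt_in_O_half [of 1 0 0] red7_O_half_elt [of 1 0 0]
  by (simp_all add: O_half_elt_def)

lemma O_half_add: "x \<in> O_half \<Longrightarrow> y \<in> O_half \<Longrightarrow> x + y \<in> O_half"
  by (elim O_halfE) (simp add: O_half_elt_add)

lemma O_half_mult: "x \<in> O_half \<Longrightarrow> y \<in> O_half \<Longrightarrow> x * y \<in> O_half"
  by (elim O_halfE) (simp add: O_half_elt_mult)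

lemma O_half_cnj: "x \<in> O_half \<Longrightarrow> cnj x \<in> O_half"
  by (elim O_halfE) (simp add: cnj_O_half_elt)

lemma red7_add:
  assumes "x \<in> O_half" "y \<in> O_half"
  shows "red7 (x + y) = red7 x + red7 y"
proof -
  obtain a b k c d j where x: "x = O_half_elt a b k" and y: "y = O_half_elt c d j"
    using assms by (metis O_halfE)
  have "(of_int (a * 2^j + c * 2^k + 4 * (b * 2^j + d * 2^k)) * 4^(k + j) :: 7)
      = of_int (a + 4*b) * 4^k * (2^j * 4^j) + of_int (c + 4*d) * 4^j * (2^k * 4^k)"
    by (simp add: algebra_simps power_add)
  then show ?thesis
    unfolding x y O_half_elt_add red7_O_half_elt by (simp add: two_pow_mult_four_pow)
qed

lemma red7_mult:
  assumes "x \<in> O_half" "y \<in> O_half"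
  shows "red7 (x * y) = red7 x * red7 y"
proof -
  obtain a b k c d j where x: "x = O_half_elt a b k" and y: "y = O_half_elt c d j"
    using assms by (metis O_halfE)
  have "(of_int (a*c - 2*b*d + 4 * (a*d + b*c + b*d)) :: 7) = of_int ((a + 4*b) * (c + 4*d))"
    unfolding of_int_7_eq_iff by (simp add: algebra_simps)
  then show ?thesis
    unfolding x y O_half_elt_mult red7_O_half_elt by (simp add: power_add)
qed

lemma red7_cnj:
  assumes "x \<in> O_half"
  shows "red7 (cnj x) = red7 x"
proof -
  obtain a b k where x: "x = O_half_elt a b k"
    using assms by (rule O_halfE)
  have same_residue: "(of_int (a + b + 4 * (- b)) :: 7) = of_int (a + 4*b)"
    unfolding of_int_7_eq_iff by simp
  show ?thesis
    by (simp only: x cnj_O_half_elt red7_O_half_elt same_residue)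
qed

lemma O_half_sum: "(\<And>i. i \<in> I \<Longrightarrow> f i \<in> O_half) \<Longrightarrow> sum f I \<in> O_half"
  by (induction I rule: infinite_finite_induct) (simp_all add: O_half_0 O_half_add)

lemma red7_sum:
  "(\<And>i. i \<in> I \<Longrightarrow> f i \<in> O_half) \<Longrightarrow> red7 (sum f I) = (\<Sum>i\<in>I. red7 (f i))"
  by (induction I rule: infinite_finite_induct) (simp_all add: red7_0 red7_add O_half_sum)

definition O_half_matrix :: "complex^3^3 \<Rightarrow> bool" where
  "O_half_matrix g \<longleftrightarrow> (\<forall>i j. g $ i $ j \<in> O_half)"

lemma GammaL_iff: "g \<in> GammaL \<longleftrightarrow> O_half_matrix g \<and> g ** conj_transp g = mat 1"
  unfolding GammaL_def O_half_matrix_def by simp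

lemma O_half_matrix_mult:
  "O_half_matrix g \<Longrightarrow> O_half_matrix h \<Longrightarrow> O_half_matrix (g ** h)"
  unfolding O_half_matrix_def matrix_matrix_mult_def by (simp add: O_half_sum O_half_mult)

lemma red_mat_mult:
  "O_half_matrix g \<Longrightarrow> O_half_matrix h \<Longrightarrow> red_mat (g ** h) = red_mat g ** red_mat h"
  unfolding O_half_matrix_def red_mat_def matrix_matrix_mult_def
  by (simp add: vec_eq_iff red7_sum red7_mult O_half_mult)

lemma O_half_matrix_conj_transp: "O_half_matrix g \<Longrightarrow> O_half_matrix (conj_transp g)"
  unfolding O_half_matrix_def conj_transp_def by (simp add: O_half_cnj)

lemma red_mat_conj_transp:
  "O_half_matrix g \<Longrightarrow> red_mat (conj_transp g) = transpose (red_mat g)"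
  unfolding O_half_matrix_def red_mat_def conj_transp_def transpose_def
  by (simp add: vec_eq_iff red7_cnj)

lemma O_half_matrix_1: "O_half_matrix (mat 1)"
  unfolding O_half_matrix_def mat_def by (simp add: O_half_0 O_half_1)

lemma red_mat_1: "red_mat (mat 1) = mat 1"
  unfolding red_mat_def mat_def by (simp add: vec_eq_iff red7_0 red7_1)

lemma conj_transp_mult: "conj_transp (g ** h) = conj_transp h ** conj_transp g"
  unfolding conj_transp_def matrix_matrix_mult_def by (simp add: vec_eq_iff mult.commute)

lemma conj_transp_1: "conj_transp (mat 1) = mat 1"
  unfolding conj_transp_def mat_def by (simp add: vec_eq_iff)

lemma GammaL_mult:
  assumes "g \<in> GammaL" "h \<in> GammaL"
  shows "g ** h \<in> GammaL"
proof -
  have "(g ** h) ** conj_transp (g ** h) = g ** (h ** conj_transp h) ** conj_transp g"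
    by (simp add: conj_transp_mult matrix_mul_assoc)
  with assms show ?thesis
    unfolding GammaL_iff by (simp add: O_half_matrix_mult)
qed

lemma GammaL_conj_transp:
  assumes "g \<in> GammaL"
  shows "conj_transp g \<in> GammaL"
proof -
  have "conj_transp (conj_transp g) = g"
    unfolding conj_transp_def by (simp add: vec_eq_iff)
  moreover have "conj_transp g ** g = mat 1"
    using assms unfolding GammaL_iff by (metis matrix_left_right_inverse1)
  ultimately show ?thesis
    using assms unfolding GammaL_iff by (simp add: O_half_matrix_conj_transp)
qed

definition reduced_GammaL :: "(7^3^3) set" where
  "reduced_GammaL = red_mat ` GammaL"

lemma reduced_GammaL_intro:
  "O_half_matrix g \<Longrightarrow> g ** conj_transp g = mat 1 \<Longrightarrow> red_mat g = A \<Longrightarrow> A \<in> reduced_GammaL"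
  unfolding reduced_GammaL_def by (auto simp: GammaL_iff)

lemma mat_1_in_reduced_GammaL: "mat 1 \<in> reduced_GammaL"
  by (rule reduced_GammaL_intro [OF O_half_matrix_1]) (simp_all add: conj_transp_1 red_mat_1)

lemma reduced_GammaL_mult:
  assumes "A \<in> reduced_GammaL" "B \<in> reduced_GammaL"
  shows "A ** B \<in> reduced_GammaL"
proof -
  obtain g h where "g \<in> GammaL" "h \<in> GammaL" "A = red_mat g" "B = red_mat h"
    using assms unfolding reduced_GammaL_def by auto
  then show ?thesis
    unfolding reduced_GammaL_def
    by (metis GammaL_iff GammaL_mult red_mat_mult image_eqI)
qed

lemma reduced_GammaL_transpose:
  assumes "A \<in> reduced_GammaL"
  shows "transpose A \<in> reduced_GammaL"
proof -
  obtain g where "g \<in> GammaL" "A = red_mat g"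
    using assms unfolding reduced_GammaL_def by auto
  then show ?thesis
    unfolding reduced_GammaL_def
    by (metis GammaL_iff GammaL_conj_transp red_mat_conj_transp image_eqI)
qed

lemma reduced_GammaL_mult_transpose:
  assumes "A \<in> reduced_GammaL"
  shows "A ** transpose A = mat 1"
proof -
  obtain g where g: "g \<in> GammaL" "A = red_mat g"
    using assms unfolding reduced_GammaL_def by auto
  then have "red_mat (g ** conj_transp g) = A ** transpose A"
    by (metis GammaL_iff O_half_matrix_conj_transp red_mat_conj_transp red_mat_mult)
  with g show ?thesis
    unfolding GammaL_iff by (simp add: red_mat_1)
qed

lemma reduced_GammaL_orthogonal:
  assumes "A \<in> reduced_GammaL"
  shows "transpose A ** A = mat 1"
  using reduced_GammaL_mult_transpose [OF reduced_GammaL_transpose [OF assms]] by simp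

lemma reduced_GammaL_subset_O3_7: "reduced_GammaL \<subseteq> O3_7"
  unfolding O3_7_def using reduced_GammaL_orthogonal by blast

lemmas matrix3_simps = vec_eq_iff forall_3 sum_3 vector_3 mat_def transpose_def
  matrix_matrix_mult_def matrix_vector_mult_def conj_transp_def red_mat_def O_half_matrix_def

definition swap12 :: "'a::comm_ring_1^3^3" where
  "swap12 = vector [vector [0, 1, 0], vector [1, 0, 0], vector [0, 0, 1]]"

definition swap13 :: "'a::comm_ring_1^3^3" where
  "swap13 = vector [vector [0, 0, 1], vector [0, 1, 0], vector [1, 0, 0]]"

definition flip3 :: "'a::comm_ring_1^3^3" where
  "flip3 = vector [vector [1, 0, 0], vector [0, 1, 0], vector [0, 0, -1]]"

definition rot23_lift :: "complex^3^3" where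
  "rot23_lift = vector [vector [1, 0, 0], vector [0, omega7 / 2, omega7 / 2],
                        vector [0, (omega7 - 1) / 2, (1 - omega7) / 2]]"

definition rot23 :: "7^3^3" where
  "rot23 = vector [vector [1, 0, 0], vector [0, 2, 2], vector [0, 5, 2]]"

lemma O_half_elt_values:
  "O_half_elt (-1) 0 0 = -1" "O_half_elt 0 1 1 = omega7 / 2"
  "O_half_elt (-1) 1 1 = (omega7 - 1) / 2" "O_half_elt 1 (-1) 1 = (1 - omega7) / 2"
  by (simp_all add: O_half_elt_def)

lemma O_half_values:
  "-1 \<in> O_half" "omega7 / 2 \<in> O_half" "(omega7 - 1) / 2 \<in> O_half" "(1 - omega7) / 2 \<in> O_half"
  by (metis O_half_elt_in_O_half O_half_elt_values)+

lemma red7_values: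
  "red7 (-1) = -1" "red7 (omega7 / 2) = 2" "red7 ((omega7 - 1) / 2) = 5" "red7 ((1 - omega7) / 2) = 2"
  by (simp_all flip: O_half_elt_values add: red7_O_half_elt)

lemma swap12_in_reduced_GammaL: "swap12 \<in> reduced_GammaL"
  by (rule reduced_GammaL_intro [of swap12])
    (simp_all add: swap12_def matrix3_simps O_half_0 O_half_1 red7_0 red7_1)

lemma swap13_in_reduced_GammaL: "swap13 \<in> reduced_GammaL"
  by (rule reduced_GammaL_intro [of swap13])
    (simp_all add: swap13_def matrix3_simps O_half_0 O_half_1 red7_0 red7_1)

lemma flip3_in_reduced_GammaL: "flip3 \<in> reduced_GammaL"
  by (rule reduced_GammaL_intro [of flip3])
    (simp_all add: flip3_def matrix3_simps O_half_0 O_half_1 O_half_values red7_0 red7_1 red7_values)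

lemma rot23_in_reduced_GammaL: "rot23 \<in> reduced_GammaL"
proof (rule reduced_GammaL_intro [of rot23_lift])
  show "rot23_lift ** conj_transp rot23_lift = mat 1"
    by (simp add: rot23_lift_def matrix3_simps cnj_omega7 field_simps omega7_squared)
qed (simp_all add: rot23_lift_def rot23_def matrix3_simps O_half_0 O_half_1 O_half_values
      red7_0 red7_1 red7_values)

lemma exhaust_7:
  fixes x :: 7
  shows "x = 0 \<or> x = 1 \<or> x = 2 \<or> x = 3 \<or> x = 4 \<or> x = 5 \<or> x = 6"
proof (induct x)
  case (of_int z)
  then have "z = 0 \<or> z = 1 \<or> z = 2 \<or> z = 3 \<or> z = 4 \<or> z = 5 \<or> z = 6" by fastforce
  then show ?case by auto
qed

lemma forall_7: "(\<forall>x::7. P x) \<longleftrightarrow> P 0 \<and> P 1 \<and> P 2 \<and> P 3 \<and> P 4 \<and> P 5 \<and> P 6"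
  by (metis exhaust_7)

lemma sum_squares_eq_0_7: "y * y + z * z = (0::7) \<Longrightarrow> y = 0 \<and> z = 0"
proof -
  have "\<forall>y z :: 7. y * y + z * z = 0 \<longrightarrow> y = 0 \<and> z = 0"
    unfolding forall_7 by simp
  then show "y * y + z * z = 0 \<Longrightarrow> y = 0 \<and> z = 0" by blast
qed

lemma square_eq_1_7: "c * c = (1::7) \<Longrightarrow> c = 1 \<or> c = -1"
proof -
  have "\<forall>c :: 7. c * c = 1 \<longrightarrow> c = 1 \<or> c = -1"
    unfolding forall_7 by simp
  then show "c * c = 1 \<Longrightarrow> c = 1 \<or> c = -1" by blast
qed

lemma nonzero_inverse_7: "s \<noteq> (0::7) \<Longrightarrow> s * s ^ 5 = 1"
proof -
  have "\<forall>s :: 7. s \<noteq> 0 \<longrightarrow> s * s ^ 5 = 1"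
    unfolding forall_7 by simp
  then show "s \<noteq> 0 \<Longrightarrow> s * s ^ 5 = 1" by blast
qed

lemma one_minus_square_7:
  assumes "c * c \<noteq> (2::7)"
  obtains s where "c * c + s * s = 1"
proof -
  have "\<forall>c :: 7. c * c \<noteq> 2 \<longrightarrow> 1 - c * c = 0 * 0 \<or> 1 - c * c = 1 * 1 \<or> 1 - c * c = 2 * 2"
    unfolding forall_7 by simp
  with assms that show ?thesis
    by (metis add.commute diff_add_cancel)
qed

text \<open>The powers of \<open>rot23\<close> form the full rotation group of the conic \<open>b\<^sup>2 + d\<^sup>2 = 1\<close>,
  which has \<open>8\<close> points because \<open>-1\<close> is not a square mod \<open>7\<close>.\<close>
lemma unit_circle_rotation_7:
  assumes "b * b + d * d = (1::7)"
  shows "\<exists>p q. vector [vector [1, 0, 0], vector [0, b, p], vector [0, d, q]] \<in> reduced_GammaL"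
proof -
  let ?P = "\<lambda>b d :: 7. \<exists>p q. vector [vector [1, 0, 0], vector [0, b, p], vector [0, d, q]] \<in> reduced_GammaL"
  have step: "?P b' d'" if "?P b d" and b': "b' = 2 * b + 2 * d" and d': "d' = 5 * b + 2 * d"
    for b d b' d'
  proof -
    obtain p q where M: "vector [vector [1, 0, 0], vector [0, b, p], vector [0, d, q]] \<in> reduced_GammaL"
      using \<open>?P b d\<close> by blast
    have "rot23 ** vector [vector [1, 0, 0], vector [0, b, p], vector [0, d, q]]
        = (vector [vector [1, 0, 0], vector [0, b', 2 * p + 2 * q], vector [0, d', 5 * p + 2 * q]] :: 7^3^3)"
      unfolding rot23_def b' d' by (simp add: matrix3_simps)
    then show ?thesis
      using reduced_GammaL_mult [OF rot23_in_reduced_GammaL M] by metis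
  qed
  have "mat 1 = (vector [vector [1, 0, 0], vector [0, 1, 0], vector [0, 0, 1]] :: 7^3^3)"
    by (simp add: matrix3_simps)
  then have "?P 1 0" using mat_1_in_reduced_GammaL by metis
  moreover from this have "?P 2 5" by (rule step) simp_all
  moreover from this have "?P 0 6" by (rule step) simp_all
  moreover from this have "?P 5 5" by (rule step) simp_all
  moreover from this have "?P 6 0" by (rule step) simp_all
  moreover from this have "?P 5 2" by (rule step) simp_all
  moreover from this have "?P 0 1" by (rule step) simp_all
  moreover from this have "?P 2 2" by (rule step) simp_all
  moreover have "\<forall>b d :: 7. b * b + d * d = 1 \<longrightarrow> b = 1 \<and> d = 0 \<or> b = 2 \<and> d = 5 \<or> b = 0 \<and> d = 6
      \<or> b = 5 \<and> d = 5 \<or> b = 6 \<and> d = 0 \<or> b = 5 \<and> d = 2 \<or> b = 0 \<and> d = 1 \<or> b = 2 \<and> d = 2"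
    unfolding forall_7 by simp
  ultimately show ?thesis
    using assms by blast
qed

lemma rotation_23_7:
  assumes "y * y + z * z = s * (s::7)"
  shows "\<exists>B\<in>reduced_GammaL. B *v vector [x, s, 0] = vector [x, y, z]"
proof (cases "s = 0")
  case True
  with assms have "y * y + z * z = 0" by simp
  then have "y = 0" "z = 0" using sum_squares_eq_0_7 by blast+
  with \<open>s = 0\<close> show ?thesis
    by (intro bexI [of _ "mat 1"]) (simp_all add: mat_1_in_reduced_GammaL)
next
  case False
  define t where "t = s ^ 5"
  have st: "s * t = 1"
    unfolding t_def using False by (rule nonzero_inverse_7)
  have "(y * t) * (y * t) + (z * t) * (z * t) = (y * y + z * z) * (t * t)"
    by (simp add: algebra_simps)
  also have "\<dots> = (s * t) * (s * t)"
    unfolding assms by (simp add: algebra_simps)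
  finally have "(y * t) * (y * t) + (z * t) * (z * t) = 1"
    using st by simp
  then obtain p q where B:
    "vector [vector [1, 0, 0], vector [0, y * t, p], vector [0, z * t, q]] \<in> reduced_GammaL"
    using unit_circle_rotation_7 by blast
  have "(vector [vector [1, 0, 0], vector [0, y * t, p], vector [0, z * t, q]] :: 7^3^3) *v vector [x, s, 0]
      = vector [x, y * (s * t), z * (s * t)]"
    by (simp add: matrix3_simps algebra_simps)
  with B st show ?thesis by (metis mult_1_right)
qed

lemma swap12_mult_vector: "swap12 *v vector [a, b, c] = (vector [b, a, c] :: 'a::comm_ring_1^3)"
  by (simp add: swap12_def matrix3_simps)

lemma swap13_mult_vector: "swap13 *v vector [a, b, c] = (vector [c, b, a] :: 'a::comm_ring_1^3)"
  by (simp add: swap13_def matrix3_simps)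

lemma reduced_GammaL_reaches_sphere_point:
  assumes "x * x + y * y + z * z = (1::7)" and "x * x \<noteq> 2"
  shows "\<exists>h\<in>reduced_GammaL. h *v vector [1, 0, 0] = vector [x, y, z]"
proof -
  obtain s where s: "x * x + s * s = 1"
    using one_minus_square_7 [OF \<open>x * x \<noteq> 2\<close>] .
  then have "s * s + x * x = 1 * 1" by (simp add: add.commute)
  then obtain A where A: "A \<in> reduced_GammaL" "A *v vector [0, 1, 0] = vector [0, s, x]"
    using rotation_23_7 by blast
  from s assms(1) have "y * y + z * z = s * s"
    by (metis add.assoc add_left_cancel)
  then obtain B where B: "B \<in> reduced_GammaL" "B *v vector [x, s, 0] = vector [x, y, z]"
    using rotation_23_7 by blast
  have "(B ** swap13 ** A ** swap12) *v vector [1, 0, 0] = vector [x, y, z]"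
    using A(2) B(2) by (simp add: matrix_vector_mul_assoc [symmetric] swap12_mult_vector swap13_mult_vector)
  moreover have "B ** swap13 ** A ** swap12 \<in> reduced_GammaL"
    using A(1) B(1) by (simp add: reduced_GammaL_mult swap12_in_reduced_GammaL swap13_in_reduced_GammaL)
  ultimately show ?thesis by blast
qed

lemma reduced_GammaL_transitive_on_sphere:
  assumes "x * x + y * y + z * z = (1::7)"
  shows "\<exists>h\<in>reduced_GammaL. h *v vector [1, 0, 0] = vector [x, y, z]"
proof -
  consider "x * x \<noteq> 2" | "y * y \<noteq> 2" | "z * z \<noteq> 2"
    using assms by fastforce
  then show ?thesis
  proof cases
    case 1
    with assms show ?thesis by (rule reduced_GammaL_reaches_sphere_point)
  next
    case 2
    from assms have "y * y + x * x + z * z = 1" by (simp add: ac_simps)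
    with 2 obtain h where "h \<in> reduced_GammaL" "h *v vector [1, 0, 0] = vector [y, x, z]"
      using reduced_GammaL_reaches_sphere_point by blast
    then show ?thesis
      by (intro bexI [of _ "swap12 ** h"])
        (simp_all add: matrix_vector_mul_assoc [symmetric] swap12_mult_vector
          reduced_GammaL_mult swap12_in_reduced_GammaL)
  next
    case 3
    from assms have "z * z + y * y + x * x = 1" by (simp add: ac_simps)
    with 3 obtain h where "h \<in> reduced_GammaL" "h *v vector [1, 0, 0] = vector [z, y, x]"
      using reduced_GammaL_reaches_sphere_point by blast
    then show ?thesis
      by (intro bexI [of _ "swap13 ** h"])
        (simp_all add: matrix_vector_mul_assoc [symmetric] swap13_mult_vector
          reduced_GammaL_mult swap13_in_reduced_GammaL)
  qed
qed

lemma orthogonal_transpose_mult: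
  fixes Q M :: "'a::comm_ring_1^'n^'n"
  assumes "Q ** transpose Q = mat 1" and "transpose M ** M = mat 1"
  shows "transpose (transpose Q ** M) ** (transpose Q ** M) = mat 1"
proof -
  have "transpose (transpose Q ** M) ** (transpose Q ** M) = transpose M ** (Q ** transpose Q) ** M"
    by (simp add: matrix_transpose_mul matrix_mul_assoc)
  with assms show ?thesis by simp
qed

lemma orthogonal_transpose_mult_vector:
  fixes Q :: "'a::comm_ring_1^'n^'n"
  assumes "transpose Q ** Q = mat 1" and "Q *v v = w"
  shows "transpose Q *v w = v"
  using assms by (metis matrix_vector_mul_assoc matrix_vector_mul_lid)

lemma orthogonal_fixing_first_axis:
  fixes M :: "'a::comm_ring_1^3^3"
  assumes "transpose M ** M = mat 1" and "M *v vector [1, 0, 0] = vector [1, 0, 0]"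
  shows "M = vector [vector [1, 0, 0], vector [0, M$2$2, M$2$3], vector [0, M$3$2, M$3$3]]"
    and "M$2$2 * M$2$2 + M$3$2 * M$3$2 = 1"
  using assms by (auto simp: matrix3_simps)

lemma orthogonal_fixing_two_axes_7:
  fixes N :: "7^3^3"
  assumes "transpose N ** N = mat 1"
    and "N *v vector [1, 0, 0] = vector [1, 0, 0]" and "N *v vector [0, 1, 0] = vector [0, 1, 0]"
  shows "N = mat 1 \<or> N = flip3"
proof -
  have "N = vector [vector [1, 0, 0], vector [0, 1, 0], vector [0, 0, N$3$3]]"
    and "N$3$3 * N$3$3 = 1"
    using assms by (auto simp: matrix3_simps)
  then show ?thesis
    using square_eq_1_7 by (auto simp: flip3_def matrix3_simps)
qed

lemma orthogonal_fixing_first_axis_in_reduced_GammaL: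
  fixes M :: "7^3^3"
  assumes M: "transpose M ** M = mat 1" and M_e1: "M *v vector [1, 0, 0] = vector [1, 0, 0]"
  shows "M \<in> reduced_GammaL"
proof -
  let ?e1 = "vector [1, 0, 0] :: 7^3" and ?e2 = "vector [0, 1, 0] :: 7^3"
  have M_eq: "M = vector [vector [1, 0, 0], vector [0, M$2$2, M$2$3], vector [0, M$3$2, M$3$3]]"
    and "M$2$2 * M$2$2 + M$3$2 * M$3$2 = 1"
    using orthogonal_fixing_first_axis [OF M M_e1] by blast+
  then obtain p q where rot:
    "vector [vector [1, 0, 0], vector [0, M$2$2, p], vector [0, M$3$2, q]] \<in> reduced_GammaL"
    using unit_circle_rotation_7 by blast
  let ?R = "vector [vector [1, 0, 0], vector [0, M$2$2, p], vector [0, M$3$2, q]] :: 7^3^3"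
  have "?R *v ?e1 = M *v ?e1" "?R *v ?e2 = M *v ?e2"
    by (subst (2) M_eq, simp add: matrix3_simps)+
  with rot obtain R where R: "R \<in> reduced_GammaL" "R *v ?e1 = M *v ?e1" "R *v ?e2 = M *v ?e2"
    by blast
  define N where "N = transpose R ** M"
  have "N *v ?e1 = ?e1" "N *v ?e2 = ?e2"
    unfolding N_def matrix_vector_mul_assoc [symmetric]
    using reduced_GammaL_orthogonal [OF R(1)] R(2,3)
    by (metis orthogonal_transpose_mult_vector)+
  moreover have "transpose N ** N = mat 1"
    unfolding N_def using reduced_GammaL_mult_transpose [OF R(1)] M
    by (rule orthogonal_transpose_mult)
  ultimately have N: "N \<in> reduced_GammaL"
    using orthogonal_fixing_two_axes_7 mat_1_in_reduced_GammaL flip3_in_reduced_GammaL by blast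
  have "R ** N = (R ** transpose R) ** M"
    unfolding N_def by (simp add: matrix_mul_assoc)
  then have "R ** N = M"
    by (simp add: reduced_GammaL_mult_transpose [OF R(1)])
  with R(1) N show ?thesis
    by (metis reduced_GammaL_mult)
qed

lemma O3_7_subset_reduced_GammaL: "O3_7 \<subseteq> reduced_GammaL"
proof
  fix A
  assume "A \<in> O3_7"
  then have A: "transpose A ** A = mat 1"
    unfolding O3_7_def by simp
  let ?e1 = "vector [1, 0, 0] :: 7^3"
  have "A$1$1 * A$1$1 + A$2$1 * A$2$1 + A$3$1 * A$3$1 = 1"
    using A by (simp add: matrix3_simps)
  moreover have "A *v ?e1 = vector [A$1$1, A$2$1, A$3$1]"
    by (simp add: matrix3_simps)
  ultimately obtain h where h: "h \<in> reduced_GammaL" "h *v ?e1 = A *v ?e1"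
    using reduced_GammaL_transitive_on_sphere by metis
  have "transpose (transpose h ** A) ** (transpose h ** A) = mat 1"
    using reduced_GammaL_mult_transpose [OF h(1)] A by (rule orthogonal_transpose_mult)
  moreover have "(transpose h ** A) *v ?e1 = ?e1"
    unfolding matrix_vector_mul_assoc [symmetric]
    using reduced_GammaL_orthogonal [OF h(1)] h(2) by (rule orthogonal_transpose_mult_vector)
  ultimately have "transpose h ** A \<in> reduced_GammaL"
    by (rule orthogonal_fixing_first_axis_in_reduced_GammaL)
  moreover have "h ** (transpose h ** A) = A"
    using reduced_GammaL_mult_transpose [OF h(1)] by (simp add: matrix_mul_assoc)
  ultimately show "A \<in> reduced_GammaL"
    using h(1) reduced_GammaL_mult by metis
qed

theorem lemma2p2:
  shows "PGammaL_to_PO3 ` GammaL = PO3_7"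
proof -
  have "PGammaL_to_PO3 ` GammaL = po_class ` reduced_GammaL"
    unfolding PGammaL_to_PO3_def reduced_GammaL_def by (simp add: image_image)
  also have "reduced_GammaL = O3_7"
    using reduced_GammaL_subset_O3_7 O3_7_subset_reduced_GammaL by (rule equalityI)
  finally show ?thesis
    unfolding PO3_7_def .
qed

end
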